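(* Let $d\ge3$, let $\lambda$ be real, and let $\sigma$ be a Hermitian operator on $\mathbb{C}^d\otimes\mathbb{C}^d$ whose partial transpose is $\sigma^{PT}=\lambda I-(\lambda+1)|\Phi_0\rangle\langle\Phi_0|$, where $|\Phi_0\rangle=\frac{1}{\sqrt d}\sum_{j=0}^{d-1}|jj\rangle$. Then: (1) if $\lambda\ge 2/(d-2)$, then $\langle v|\sigma^{PT}|v\rangle\ge0$ for every vector $|v\rangle$ of Schmidt rank two (i.e. $\sigma$ is pseudo one-copy undistillable); (2) if $\lambda<2/(d-2)$, then there exists a vector $|v\rangle$ of Schmidt rank two with $\langle v|\sigma^{PT}|v\rangle<0$.
   Context: The partial transpose on the second factor is $\langle ij|X^{PT}|kl\rangle=\langle il|X|kj\rangle$. A (possibly unnormalized) state $\sigma$ is called pseudo one-copy undistillable if $\langle\phi|\sigma^{PT}|\phi\rangle\ge0$ for all vectors $|\phi\rangle$ of Schmidt rank two. *)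

theory Defs
  imports Complex_Main "HOL-Library.Complex_Order"
begin

text \<open>Operators on C^d (x) C^d are represented by their matrix entries
  X i j k l = <ij|X|kl>, vectors by their coefficients v i j = <ij|v>;
  only indices below d are relevant.\<close>

type_synonym op4 = "nat \<Rightarrow> nat \<Rightarrow> nat \<Rightarrow> nat \<Rightarrow> complex"
type_synonym vec2 = "nat \<Rightarrow> nat \<Rightarrow> complex"

definition partial_transpose :: "op4 \<Rightarrow> op4" where
  "partial_transpose X = (\<lambda>i j k l. X i l k j)"

definition hermitian_op :: "nat \<Rightarrow> op4 \<Rightarrow> bool" where
  "hermitian_op d X \<longleftrightarrow>
     (\<forall>i<d. \<forall>j<d. \<forall>k<d. \<forall>l<d. X i j k l = cnj (X k l i j))"

text \<open>Entries of |Phi_0><Phi_0| with |Phi_0> = (1/sqrt d) sum_j |jj>.\<close>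
definition Phi0_proj :: "nat \<Rightarrow> op4" where
  "Phi0_proj d = (\<lambda>i j k l. if i = j \<and> k = l then 1 / of_nat d else 0)"

definition id_op :: op4 where
  "id_op = (\<lambda>i j k l. if i = k \<and> j = l then 1 else 0)"

definition qform :: "nat \<Rightarrow> op4 \<Rightarrow> vec2 \<Rightarrow> complex" where
  "qform d X v = (\<Sum>i<d. \<Sum>j<d. \<Sum>k<d. \<Sum>l<d. cnj (v i j) * X i j k l * v k l)"

definition schmidt_rank :: "nat \<Rightarrow> vec2 \<Rightarrow> nat" where
  "schmidt_rank d v = (LEAST r. \<exists>a b :: nat \<Rightarrow> nat \<Rightarrow> complex.
      \<forall>i<d. \<forall>j<d. v i j = (\<Sum>s<r. a s i * b s j))"

end

(* Writing V for the coefficient matrix of v, the form is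
     <v|sigma^PT|v> = lam ||V||^2 - (lam + 1) |tr V|^2 / d.
   If V has rank at most two, one Gram-Schmidt step writes V = x u^T + y w^T with x orthogonal
   to y; then |tr V| <= |u^T x| + |w^T y|, and Cauchy-Schwarz gives |tr V|^2 <= 2 ||V||^2, so the
   form is at least ||V||^2 (lam (d - 2) - 2) / d.  The vector |00> + |11> attains
   |tr V|^2 = 2 ||V||^2 = 4, so the threshold is sharp. *)

theory Submission
  imports Defs "HOL-Analysis.Convex"
begin

definition sq_norm :: "nat \<Rightarrow> (nat \<Rightarrow> complex) \<Rightarrow> real" where
  "sq_norm d x = (\<Sum>i<d. (cmod (x i))\<^sup>2)"

definition cinner :: "nat \<Rightarrow> (nat \<Rightarrow> complex) \<Rightarrow> (nat \<Rightarrow> complex) \<Rightarrow> complex" where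
  "cinner d x y = (\<Sum>i<d. cnj (x i) * y i)"

definition hs_sq_norm :: "nat \<Rightarrow> vec2 \<Rightarrow> real" where
  "hs_sq_norm d v = (\<Sum>i<d. \<Sum>j<d. (cmod (v i j))\<^sup>2)"

definition diag_sum :: "nat \<Rightarrow> vec2 \<Rightarrow> complex" where
  "diag_sum d v = (\<Sum>i<d. v i i)"

lemma of_real_cmod_sq: "(complex_of_real (cmod z))\<^sup>2 = cnj z * z"
  by (metis complex_norm_square mult.commute of_real_power)

lemma of_real_sq_norm: "complex_of_real (sq_norm d x) = cinner d x x"
  by (simp add: sq_norm_def cinner_def of_real_cmod_sq)

lemma sq_norm_eq_zeroD: "sq_norm d x = 0 \<Longrightarrow> i < d \<Longrightarrow> x i = 0"
  unfolding sq_norm_def by (subst (asm) sum_nonneg_eq_0_iff) auto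

lemma hs_sq_norm_nonneg: "0 \<le> hs_sq_norm d v"
  by (simp add: hs_sq_norm_def sum_nonneg)

lemma cmod_sum_mult_sq_le: "(cmod (\<Sum>i<d. a i * b i))\<^sup>2 \<le> sq_norm d a * sq_norm d b"
proof -
  have "cmod (\<Sum>i<d. a i * b i) \<le> (\<Sum>i<d. cmod (a i) * cmod (b i))"
    using norm_sum[of "\<lambda>i. a i * b i"] by (simp add: norm_mult)
  then have "(cmod (\<Sum>i<d. a i * b i))\<^sup>2 \<le> (\<Sum>i<d. cmod (a i) * cmod (b i))\<^sup>2"
    by (simp add: power_mono)
  also have "\<dots> \<le> sq_norm d a * sq_norm d b"
    unfolding sq_norm_def by (rule Cauchy_Schwarz_ineq_sum)
  finally show ?thesis .
qed

lemma hs_sq_norm_orthogonal_sum: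
  assumes orth: "cinner d x y = 0"
  shows "(\<Sum>i<d. \<Sum>j<d. (cmod (x i * u j + y i * w j))\<^sup>2)
       = sq_norm d x * sq_norm d u + sq_norm d y * sq_norm d w"
proof -
  have orth': "cinner d y x = 0"
    using arg_cong[OF orth, of cnj] by (simp add: cinner_def mult.commute)
  have "complex_of_real (\<Sum>i<d. \<Sum>j<d. (cmod (x i * u j + y i * w j))\<^sup>2)
      = (\<Sum>i<d. \<Sum>j<d. (cnj (x i) * x i) * (cnj (u j) * u j) + (cnj (y i) * y i) * (cnj (w j) * w j)
          + (cnj (x i) * y i) * (cnj (u j) * w j) + (cnj (y i) * x i) * (cnj (w j) * u j))"
    by (simp only: of_real_sum of_real_power of_real_cmod_sq) (simp add: algebra_simps)
  also have "\<dots> = cinner d x x * cinner d u u + cinner d y y * cinner d w w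
          + cinner d x y * cinner d u w + cinner d y x * cinner d w u"
    by (simp add: cinner_def sum.distrib sum_product)
  also have "\<dots> = complex_of_real (sq_norm d x * sq_norm d u + sq_norm d y * sq_norm d w)"
    using orth orth' by (simp add: of_real_sq_norm)
  finally show ?thesis
    by (rule of_real_eq_iff[THEN iffD1])
qed

lemma two_term_orthogonalize:
  "\<exists>x' u' y' w'. cinner d x' y' = 0 \<and>
     (\<forall>i j. x i * u j + y i * w j = x' i * u' j + y' i * w' j)"
proof -
  \<comment> \<open>If x vanishes below d, division by zero gives c = 0, and x is orthogonal to everything.\<close>
  define c where "c = cinner d x y / cinner d x x"
  have "cinner d x (\<lambda>i. y i - c * x i) = 0"
  proof (cases "sq_norm d x = 0")
    case True
    then show ?thesis by (simp add: cinner_def sq_norm_eq_zeroD)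
  next
    case False
    then have "cinner d x x \<noteq> 0"
      by (simp flip: of_real_sq_norm)
    moreover have "cinner d x (\<lambda>i. y i - c * x i) = cinner d x y - c * cinner d x x"
      by (simp add: cinner_def algebra_simps sum_subtractf sum_distrib_left)
    ultimately show ?thesis
      by (simp add: c_def)
  qed
  then show ?thesis
  proof (intro exI conjI allI)
    show "x i * u j + y i * w j = x i * (u j + c * w j) + (y i - c * x i) * w j" for i j
      by (simp add: algebra_simps)
  qed
qed

lemma diag_sum_sq_le_of_two_terms:
  assumes "\<forall>i<d. \<forall>j<d. v i j = x i * u j + y i * w j"
  shows "(cmod (diag_sum d v))\<^sup>2 \<le> 2 * hs_sq_norm d v"
proof -
  obtain x' u' y' w' where orth: "cinner d x' y' = 0"
    and v: "\<forall>i<d. \<forall>j<d. v i j = x' i * u' j + y' i * w' j"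
    using two_term_orthogonalize[of d x u y w] assms by metis
  define A where "A = cmod (\<Sum>i<d. x' i * u' i)"
  define B where "B = cmod (\<Sum>i<d. y' i * w' i)"
  have "cmod (diag_sum d v) \<le> A + B"
    unfolding A_def B_def diag_sum_def using v by (simp add: sum.distrib norm_triangle_ineq)
  then have "(cmod (diag_sum d v))\<^sup>2 \<le> (A + B)\<^sup>2"
    by (simp add: power_mono)
  also have "\<dots> \<le> 2 * (A\<^sup>2 + B\<^sup>2)"
    using sum_squares_ge_zero[of "A - B" 0] by (simp add: power2_eq_square algebra_simps)
  also have "\<dots> \<le> 2 * (sq_norm d x' * sq_norm d u' + sq_norm d y' * sq_norm d w')"
    unfolding A_def B_def using add_mono[OF cmod_sum_mult_sq_le cmod_sum_mult_sq_le, of x' u' d y' w' d]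
    by simp
  also have "\<dots> = 2 * hs_sq_norm d v"
    unfolding hs_sq_norm_def using v by (simp add: hs_sq_norm_orthogonal_sum[OF orth])
  finally show ?thesis .
qed

lemma schmidt_decomposition:
  "\<exists>a b :: nat \<Rightarrow> nat \<Rightarrow> complex. \<forall>i<d. \<forall>j<d. v i j = (\<Sum>s<schmidt_rank d v. a s i * b s j)"
proof -
  have "\<exists>(r :: nat) a b. \<forall>i<d. \<forall>j<d. v i j = (\<Sum>s<r. a s i * b s j)"
    by (rule exI[of _ d], rule exI[of _ "\<lambda>s i. if i = s then 1 else 0"], rule exI[of _ v])
      (simp add: if_distrib[of "\<lambda>x. x * _"] cong: if_cong)
  from LeastI_ex[OF this] show ?thesis
    unfolding schmidt_rank_def .
qed

lemma schmidt_rank_le: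
  assumes "\<forall>i<d. \<forall>j<d. v i j = (\<Sum>s<r. a s i * b s j)"
  shows "schmidt_rank d v \<le> r"
  unfolding schmidt_rank_def using assms by (blast intro: Least_le)

lemma two_le_schmidt_rank:
  assumes "i < d" "i' < d" "j < d" "j' < d" and "v i j * v i' j' \<noteq> v i j' * v i' j"
  shows "2 \<le> schmidt_rank d v"
proof (rule ccontr)
  assume "\<not> 2 \<le> schmidt_rank d v"
  then consider "schmidt_rank d v = 0" | "schmidt_rank d v = 1"
    by linarith
  moreover obtain a b where ab: "\<forall>i<d. \<forall>j<d. v i j = (\<Sum>s<schmidt_rank d v. a s i * b s j)"
    using schmidt_decomposition by blast
  ultimately show False
    using assms by cases (simp_all add: ab mult_ac)
qed

lemma two_terms_of_schmidt_rank_le_two: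
  assumes "schmidt_rank d v \<le> 2"
  obtains x u y w where "\<forall>i<d. \<forall>j<d. v i j = x i * u j + y i * w j"
proof -
  obtain a b where ab: "\<forall>i<d. \<forall>j<d. v i j = (\<Sum>s<schmidt_rank d v. a s i * b s j)"
    using schmidt_decomposition by blast
  let ?a = "\<lambda>s. if s < schmidt_rank d v then a s else (\<lambda>_. 0)"
  have "(\<Sum>s<schmidt_rank d v. a s i * b s j) = ?a 0 i * b 0 j + ?a 1 i * b 1 j" for i j
    using assms by (auto simp: le_Suc_eq numeral_2_eq_2)
  with ab show ?thesis
    by (intro that[of "?a 0" "b 0" "?a 1" "b 1"]) simp
qed

lemma diag_sum_sq_le_of_schmidt_rank_le_two:
  "schmidt_rank d v \<le> 2 \<Longrightarrow> (cmod (diag_sum d v))\<^sup>2 \<le> 2 * hs_sq_norm d v"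
  by (metis two_terms_of_schmidt_rank_le_two diag_sum_sq_le_of_two_terms)

lemma qform_cong:
  assumes "\<forall>i<d. \<forall>j<d. \<forall>k<d. \<forall>l<d. X i j k l = Y i j k l"
  shows "qform d X v = qform d Y v"
  unfolding qform_def using assms by (intro sum.cong) auto

lemma qform_id_op: "qform d id_op v = complex_of_real (hs_sq_norm d v)"
proof -
  have "(\<Sum>k<d. \<Sum>l<d. cnj (v i j) * id_op i j k l * v k l) = cnj (v i j) * v i j"
    if "i < d" "j < d" for i j
  proof -
    have "cnj (v i j) * id_op i j k l * v k l
        = (if j = l then if i = k then cnj (v i j) * v i j else 0 else 0)" for k l
      by (simp add: id_op_def)
    then show ?thesis
      using that by (simp add: sum.delta')
  qed
  then show ?thesis
    unfolding qform_def hs_sq_norm_def by (simp add: of_real_cmod_sq)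
qed

lemma qform_Phi0_proj: "qform d (Phi0_proj d) v = complex_of_real ((cmod (diag_sum d v))\<^sup>2 / d)"
proof -
  have "(\<Sum>k<d. \<Sum>l<d. cnj (v i j) * Phi0_proj d i j k l * v k l)
      = (if j = i then cnj (v i i) * diag_sum d v / d else 0)" for i j
  proof -
    have "cnj (v i j) * Phi0_proj d i j k l * v k l
        = (if l = k then if j = i then cnj (v i i) * v k k / d else 0 else 0)" for k l
      by (auto simp add: Phi0_proj_def)
    then show ?thesis
      by (simp add: diag_sum_def sum_divide_distrib sum_distrib_left)
  qed
  then have "qform d (Phi0_proj d) v = cnj (diag_sum d v) * diag_sum d v / d"
    unfolding qform_def by (simp add: diag_sum_def sum_divide_distrib sum_distrib_right)
  then show ?thesis
    by (simp add: of_real_cmod_sq)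
qed

lemma qform_id_op_minus_Phi0_proj:
  "qform d (\<lambda>i j k l. complex_of_real a * id_op i j k l - complex_of_real b * Phi0_proj d i j k l) v
   = complex_of_real (a * hs_sq_norm d v - b * (cmod (diag_sum d v))\<^sup>2 / d)"
proof -
  have "qform d (\<lambda>i j k l. complex_of_real a * id_op i j k l - complex_of_real b * Phi0_proj d i j k l) v
      = complex_of_real a * qform d id_op v - complex_of_real b * qform d (Phi0_proj d) v"
    unfolding qform_def by (simp add: algebra_simps sum_subtractf sum_distrib_left)
  then show ?thesis
    by (simp add: qform_id_op qform_Phi0_proj)
qed

definition bell_vec :: vec2 where
  "bell_vec = (\<lambda>i j. if i = j \<and> i < 2 then 1 else 0)"

lemma schmidt_rank_bell_vec: "2 \<le> d \<Longrightarrow> schmidt_rank d bell_vec = 2"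
proof (rule antisym)
  show "schmidt_rank d bell_vec \<le> 2"
    by (rule schmidt_rank_le[where a = "\<lambda>s i. if i = s then 1 else 0" and b = "\<lambda>s i. if i = s then 1 else 0"])
      (auto simp: bell_vec_def numeral_2_eq_2)
  show "2 \<le> d \<Longrightarrow> 2 \<le> schmidt_rank d bell_vec"
    by (rule two_le_schmidt_rank[of 0 d 1 0 1]) (auto simp: bell_vec_def)
qed

lemma sum_lessThan_two_indicator:
  fixes d :: nat
  assumes "2 \<le> d"
  shows "(\<Sum>i<d. if i < 2 then 1 else 0) = (2 :: 'a :: semiring_1)"
proof -
  have "{i \<in> {..<d}. i < 2} = {..<2}"
    using assms by auto
  then show ?thesis
    by (simp flip: sum.inter_filter)
qed

lemma hs_sq_norm_bell_vec:
  assumes "2 \<le> d"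
  shows "hs_sq_norm d bell_vec = 2"
proof -
  have "(cmod (bell_vec i j))\<^sup>2 = (if j = i then if i < 2 then 1 else 0 else 0)" for i j
    by (simp add: bell_vec_def)
  then show ?thesis
    using assms by (simp add: hs_sq_norm_def sum_lessThan_two_indicator cong: if_cong)
qed

lemma diag_sum_bell_vec: "2 \<le> d \<Longrightarrow> diag_sum d bell_vec = 2"
  by (simp add: diag_sum_def bell_vec_def sum_lessThan_two_indicator)

lemma threshold_form_nonneg:
  fixes d lam N T :: real
  assumes "d > 2" and lam: "lam \<ge> 2 / (d - 2)" and "0 \<le> N" and "T \<le> 2 * N"
  shows "0 \<le> lam * N - (lam + 1) * T / d"
proof -
  have "lam \<ge> 0"
    using assms(1) lam by (smt (verit) divide_pos_pos)
  then have "(lam + 1) * T \<le> 2 * (lam + 1) * N"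
    using mult_left_mono[OF assms(4), of "lam + 1"] by (simp add: mult_ac)
  also have "\<dots> \<le> lam * d * N"
    using assms(1,3) lam by (intro mult_right_mono) (simp_all add: field_simps)
  finally show ?thesis
    using assms(1) by (simp add: field_simps)
qed

theorem theorem2:
  fixes d :: nat and lam :: real and \<sigma> :: op4
  assumes "d \<ge> 3"
    and "hermitian_op d \<sigma>"
    and "\<forall>i<d. \<forall>j<d. \<forall>k<d. \<forall>l<d. partial_transpose \<sigma> i j k l =
           complex_of_real lam * id_op i j k l - complex_of_real (lam + 1) * Phi0_proj d i j k l"
  shows "(lam \<ge> 2 / (real d - 2) \<longrightarrow>
            (\<forall>v. schmidt_rank d v = 2 \<longrightarrow> qform d (partial_transpose \<sigma>) v \<ge> 0))
       \<and> (lam < 2 / (real d - 2) \<longrightarrow>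
            (\<exists>v. schmidt_rank d v = 2 \<and> qform d (partial_transpose \<sigma>) v < 0))"
proof -
  have d: "real d - 2 > 0"
    using assms(1) by simp
  have qform_eq: "qform d (partial_transpose \<sigma>) v
      = complex_of_real (lam * hs_sq_norm d v - (lam + 1) * (cmod (diag_sum d v))\<^sup>2 / d)" for v
    unfolding qform_cong[OF assms(3)] by (rule qform_id_op_minus_Phi0_proj)
  have "qform d (partial_transpose \<sigma>) v \<ge> 0"
    if "lam \<ge> 2 / (real d - 2)" and "schmidt_rank d v = 2" for v
    using threshold_form_nonneg[OF _ that(1) hs_sq_norm_nonneg diag_sum_sq_le_of_schmidt_rank_le_two] that(2)
      assms(1) by (simp add: qform_eq less_eq_complex_def)
  moreover have "qform d (partial_transpose \<sigma>) bell_vec < 0" if "lam < 2 / (real d - 2)"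
    using that d assms(1)
    by (simp add: qform_eq hs_sq_norm_bell_vec diag_sum_bell_vec less_complex_def field_simps)
  moreover have "schmidt_rank d bell_vec = 2"
    using assms(1) by (simp add: schmidt_rank_bell_vec)
  ultimately show ?thesis
    by blast
qed

end
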